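(* Let $\Gamma$ be a connected simple graph and $N>2$. Then $\mathrm{Conf}_{\Gamma}(\mathbb{R}^N)$ is $(N-2)$-connected.
   Context: For a simple graph $\Gamma$ with vertex set $\{1,\dots,m\}$, $\mathrm{Conf}_{\Gamma}(X)=\{(x_1,\dots,x_m)\in X^m : x_i\neq x_j \text{ whenever } \{i,j\}\text{ is an edge}\}$. *)

theory Defs
  imports "HOL-Analysis.Analysis"
begin

definition simple_graph :: "('v \<Rightarrow> 'v \<Rightarrow> bool) \<Rightarrow> bool" where
  "simple_graph E \<longleftrightarrow> (\<forall>u v. E u v \<longrightarrow> E v u) \<and> (\<forall>v. \<not> E v v)"

definition connected_graph :: "('v \<Rightarrow> 'v \<Rightarrow> bool) \<Rightarrow> bool" where
  "connected_graph E \<longleftrightarrow> (\<forall>u v. E\<^sup>*\<^sup>* u v)"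

definition Conf :: "('v \<Rightarrow> 'v \<Rightarrow> bool) \<Rightarrow> 'a set \<Rightarrow> ('v \<Rightarrow> 'a) set" where
  "Conf E X = {x. (\<forall>v. x v \<in> X) \<and> (\<forall>u v. E u v \<longrightarrow> x u \<noteq> x v)}"

definition k_connected_space :: "nat \<Rightarrow> 'a topology \<Rightarrow> bool" where
  "k_connected_space k X \<longleftrightarrow> topspace X \<noteq> {} \<and>
     (\<forall>i\<le>k. \<forall>f. continuous_map (nsphere i) X f \<longrightarrow>
        (\<exists>c. homotopic_with (\<lambda>_. True) (nsphere i) X f (\<lambda>_. c)))"

end

(* Conf_Gamma(R^N) is the complement of the linear subspaces {x. x u = x v}, one for each edge,
   each of codimension N.  A map from the i-sphere, i <= N - 2, may be taken to live on the unit
   sphere of an (i+1)-dimensional subspace L of R^N, and it stays a uniform distance away from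
   these diagonals.  Approximate it by a polynomial map p: as dim L < N, every difference
   p v - p u maps L onto a null set, so after small generic translations of the coordinates the
   approximation misses all diagonals on the whole of L.  The straight-line homotopy to the
   approximation stays in Conf_Gamma(R^N), and the approximation, being defined on the
   contractible space L, is nullhomotopic. *)

theory Submission
  imports Defs "HOL-Homology.Homology"
begin

lemma homotopic_with_canonI:
  fixes h :: "real \<times> 'a::topological_space \<Rightarrow> 'b::topological_space"
  assumes "continuous_on ({0..1} \<times> S) h" "h ` ({0..1} \<times> S) \<subseteq> T"
    and "\<And>x. x \<in> S \<Longrightarrow> h (0, x) = f x" "\<And>x. x \<in> S \<Longrightarrow> h (1, x) = g x"
  shows "homotopic_with_canon (\<lambda>_. True) S T f g"
  using assms by (subst homotopic_with) (auto intro!: exI[of _ h])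

lemma homotopic_with_canon_linear_family:
  fixes F G :: "'a::topological_space \<Rightarrow> 'v \<Rightarrow> 'b::real_normed_vector"
  assumes contF: "continuous_on S F" and contG: "continuous_on S G"
    and segment: "\<And>s t. s \<in> S \<Longrightarrow> t \<in> {0..1} \<Longrightarrow> (\<lambda>u. (1 - t) *\<^sub>R F s u + t *\<^sub>R G s u) \<in> T"
  shows "homotopic_with_canon (\<lambda>_. True) S T F G"
proof (rule homotopic_with_canonI)
  show "continuous_on ({0..1} \<times> S) (\<lambda>(t, s). \<lambda>u. (1 - t) *\<^sub>R F s u + t *\<^sub>R G s u)"
  proof (rule continuous_on_coordinatewise_then_product)
    fix u
    have Fu: "continuous_on S (\<lambda>s. F s u)" and Gu: "continuous_on S (\<lambda>s. G s u)"
      using contF contG by (auto intro: continuous_on_product_then_coordinatewise)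
    show "continuous_on ({0..1} \<times> S) (\<lambda>p. (case p of (t, s) \<Rightarrow> \<lambda>u. (1 - t) *\<^sub>R F s u + t *\<^sub>R G s u) u)"
      unfolding case_prod_unfold
      by (intro continuous_intros continuous_on_compose2[OF Fu] continuous_on_compose2[OF Gu]) auto
  qed
qed (use segment in auto)

lemma convex_combinations_neq_if_small_displacements:
  fixes x x' y y' :: "'a::real_normed_vector"
  assumes "norm (x' - x) + norm (y' - y) < norm (x - y)" and "0 \<le> t" "t \<le> 1"
  shows "(1 - t) *\<^sub>R x + t *\<^sub>R x' \<noteq> (1 - t) *\<^sub>R y + t *\<^sub>R y'"
proof
  assume "(1 - t) *\<^sub>R x + t *\<^sub>R x' = (1 - t) *\<^sub>R y + t *\<^sub>R y'"
  then have "x - y = t *\<^sub>R ((y' - y) - (x' - x))"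
    by (simp add: algebra_simps)
  then have "norm (x - y) = t * norm ((y' - y) - (x' - x))"
    using \<open>0 \<le> t\<close> by simp
  also have "\<dots> \<le> norm ((y' - y) - (x' - x))"
    using assms(2,3) by (simp add: mult_left_le_one_le)
  also have "\<dots> \<le> norm (x' - x) + norm (y' - y)"
    by (metis add.commute norm_triangle_ineq4)
  finally show False
    using assms(1) by simp
qed

lemma Conf_compact_image_uniformly_separated:
  fixes F :: "'a::topological_space \<Rightarrow> 'v::finite \<Rightarrow> 'b::euclidean_space"
  assumes "compact S" "continuous_on S F" "F ` S \<subseteq> Conf E UNIV"
  obtains \<delta> where "0 < \<delta>" "\<And>s u v. s \<in> S \<Longrightarrow> E u v \<Longrightarrow> \<delta> \<le> norm (F s u - F s v)"
proof -
  define K where "K = (\<Union>u. \<Union>v\<in>{v. E u v}. (\<lambda>s. F s u - F s v) ` S)"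
  have "continuous_on S (\<lambda>s. F s u)" for u
    using assms(2) by (rule continuous_on_product_then_coordinatewise)
  then have "compact ((\<lambda>s. F s u - F s v) ` S)" for u v
    using assms(1) by (intro compact_continuous_image continuous_intros)
  then have "compact K"
    unfolding K_def by (intro compact_UN) auto
  moreover have "0 \<notin> K"
    using assms(3) by (auto simp: K_def Conf_def)
  ultimately obtain \<delta> where \<delta>: "0 < \<delta>" "\<forall>x\<in>K. \<delta> \<le> dist 0 x"
    using separate_point_closed[OF compact_imp_closed] by blast
  show ?thesis
  proof
    show "0 < \<delta>"
      by (fact \<delta>(1))
    fix s u v
    assume "s \<in> S" "E u v"
    then have "F s u - F s v \<in> K"
      unfolding K_def by blast
    then show "\<delta> \<le> norm (F s u - F s v)"
      using \<delta>(2) by (simp add: dist_norm)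
  qed
qed

lemma translates_avoid_coincidences:
  fixes g :: "'i \<Rightarrow> 'a::euclidean_space \<Rightarrow> 'a"
  assumes "finite W" "negligible L" "\<And>u. u \<in> W \<Longrightarrow> g u differentiable_on L" "0 < r"
  shows "\<exists>a. (\<forall>u. norm (a u) < r) \<and> (\<forall>u\<in>W. \<forall>v\<in>W. \<forall>y\<in>L. u \<noteq> v \<longrightarrow> g u y + a u \<noteq> g v y + a v)"
  using assms(1,3)
proof (induction W rule: finite_induct)
  case empty
  then show ?case
    using \<open>0 < r\<close> by (intro exI[of _ "\<lambda>_. 0"]) simp
next
  case (insert x W)
  have "\<And>u. u \<in> W \<Longrightarrow> g u differentiable_on L"
    using insert.prems by blast
  then obtain a where a: "\<forall>u. norm (a u) < r"
    "\<forall>u\<in>W. \<forall>v\<in>W. \<forall>y\<in>L. u \<noteq> v \<longrightarrow> g u y + a u \<noteq> g v y + a v"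
    using insert.IH by blast
  define Bad where "Bad = (\<Union>v\<in>W. (\<lambda>y. g v y + a v - g x y) ` L)"
  have "negligible Bad"
    unfolding Bad_def using insert.hyps(1)
  proof (intro negligible_Union; clarsimp)
    fix v assume "v \<in> W"
    then show "negligible ((\<lambda>y. g v y + a v - g x y) ` L)"
      using insert.prems
      by (intro negligible_differentiable_image_negligible[OF order_refl \<open>negligible L\<close>]
          differentiable_on_diff differentiable_on_add differentiable_on_const) auto
  qed
  moreover have "\<not> negligible (ball (0::'a) r)"
    using \<open>0 < r\<close> by (intro open_not_negligible) auto
  ultimately have "\<not> ball 0 r \<subseteq> Bad"
    using negligible_subset by blast
  then obtain b where b: "norm b < r" "b \<notin> Bad"
    by (auto simp: subset_iff)
  have new: "g x y + b \<noteq> g v y + a v" if "v \<in> W" "y \<in> L" for v y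
  proof -
    have "b \<noteq> g v y + a v - g x y"
      using b(2) that unfolding Bad_def by blast
    then show ?thesis
      by (metis add.commute eq_diff_eq)
  qed
  show ?case
  proof (intro exI[of _ "a(x := b)"] conjI ballI allI impI)
    show "norm ((a(x := b)) u) < r" for u
      using a(1) b(1) by simp
    show "g u y + (a(x := b)) u \<noteq> g v y + (a(x := b)) v"
      if "u \<in> insert x W" "v \<in> insert x W" "y \<in> L" "u \<noteq> v" for u v y
      using that new a(2) insert.hyps(2) by (cases "u = x"; cases "v = x") (auto dest: not_sym)
  qed
qed

lemma inj_in_Conf:
  assumes "\<And>v. \<not> E v v" and "inj x"
  shows "x \<in> Conf E UNIV"
  using assms by (auto simp: Conf_def dest: injD)

lemma approx_by_pointwise_inj_on_negligible:
  fixes F :: "'a::euclidean_space \<Rightarrow> 'v::finite \<Rightarrow> 'a"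
  assumes "compact S" "continuous_on S F" "negligible L" "0 < \<epsilon>"
  obtains G where "continuous_on UNIV G" "\<And>y. y \<in> L \<Longrightarrow> inj (G y)"
    "\<And>s u. s \<in> S \<Longrightarrow> norm (G s u - F s u) < \<epsilon>"
proof -
  have "\<exists>q. polynomial_function q \<and> (\<forall>s\<in>S. norm (F s u - q s) < \<epsilon> / 2)" for u
    using assms(4)
    by (intro Stone_Weierstrass_polynomial_function[OF assms(1)]
        continuous_on_product_then_coordinatewise[OF assms(2)]) simp
  then obtain p where p: "\<And>u. polynomial_function (p u)"
    "\<And>u s. s \<in> S \<Longrightarrow> norm (F s u - p u s) < \<epsilon> / 2"
    by metis
  have "p u differentiable_on L" for u
    using p(1) by (rule differentiable_on_polynomial_function)
  then obtain a where a: "\<forall>u. norm (a u) < \<epsilon> / 2"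
    "\<forall>u\<in>UNIV. \<forall>v\<in>UNIV. \<forall>y\<in>L. u \<noteq> v \<longrightarrow> p u y + a u \<noteq> p v y + a v"
    using translates_avoid_coincidences[of UNIV L p "\<epsilon> / 2"] assms(3,4) by auto
  define G where "G s = (\<lambda>u. p u s + a u)" for s
  show thesis
  proof
    have "continuous_on UNIV (\<lambda>s. p u s + a u)" for u
      by (intro continuous_intros continuous_on_polymonial_function p(1))
    then show "continuous_on UNIV G"
      unfolding G_def by (rule continuous_on_coordinatewise_then_product)
    show "inj (G y)" if "y \<in> L" for y
      using a(2) that by (auto simp: G_def inj_def)
    fix s u
    assume "s \<in> S"
    have "norm (G s u - F s u) \<le> norm (p u s - F s u) + norm (a u)"
      unfolding G_def by (metis norm_triangle_ineq diff_add_eq)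
    also have "\<dots> < \<epsilon>"
      using p(2)[OF \<open>s \<in> S\<close>, of u] spec[OF a(1), of u] by (simp add: norm_minus_commute)
    finally show "norm (G s u - F s u) < \<epsilon>" .
  qed
qed

lemma Conf_map_nullhomotopic_if_lowdim:
  fixes F :: "'a::euclidean_space \<Rightarrow> 'v::finite \<Rightarrow> 'a"
  assumes S: "compact S" "S \<subseteq> L" and L: "subspace L" "dim L < DIM('a)"
    and loopfree: "\<And>v. \<not> E v v"
    and F: "continuous_on S F" "F ` S \<subseteq> Conf E UNIV"
  obtains c where "homotopic_with_canon (\<lambda>_. True) S (Conf E UNIV) F (\<lambda>_. c)"
proof -
  obtain \<delta> where \<delta>: "0 < \<delta>" "\<And>s u v. s \<in> S \<Longrightarrow> E u v \<Longrightarrow> \<delta> \<le> norm (F s u - F s v)"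
    using Conf_compact_image_uniformly_separated[OF S(1) F] by blast
  obtain G where contG: "continuous_on UNIV G" and injG: "\<And>y. y \<in> L \<Longrightarrow> inj (G y)"
    and G_close: "\<And>s u. s \<in> S \<Longrightarrow> norm (G s u - F s u) < \<delta> / 2"
    using approx_by_pointwise_inj_on_negligible[OF S(1) F(1) negligible_lowdim[OF L(2)]] \<delta>(1)
    by (metis half_gt_zero)
  have "G \<in> L \<rightarrow> Conf E UNIV"
    using injG loopfree inj_in_Conf by blast
  then obtain c where "homotopic_with_canon (\<lambda>_. True) L (Conf E UNIV) G (\<lambda>_. c)"
    by (rule nullhomotopic_from_contractible[OF continuous_on_subset[OF contG subset_UNIV] _
          convex_imp_contractible[OF subspace_imp_convex[OF L(1)]]])
  then have GC: "homotopic_with_canon (\<lambda>_. True) S (Conf E UNIV) G (\<lambda>_. c)"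
    using S(2) by (rule homotopic_with_subset_left)
  have FG: "homotopic_with_canon (\<lambda>_. True) S (Conf E UNIV) F G"
  proof (rule homotopic_with_canon_linear_family[OF F(1) continuous_on_subset[OF contG]])
    fix s t
    assume "s \<in> S" "t \<in> {0..1::real}"
    have "(1 - t) *\<^sub>R F s u + t *\<^sub>R G s u \<noteq> (1 - t) *\<^sub>R F s v + t *\<^sub>R G s v" if "E u v" for u v
    proof (rule convex_combinations_neq_if_small_displacements)
      show "norm (G s u - F s u) + norm (G s v - F s v) < norm (F s u - F s v)"
        using G_close[OF \<open>s \<in> S\<close>, of u] G_close[OF \<open>s \<in> S\<close>, of v] \<delta>(2)[OF \<open>s \<in> S\<close> that]
        by linarith
    qed (use \<open>t \<in> {0..1}\<close> in auto)
    then show "(\<lambda>u. (1 - t) *\<^sub>R F s u + t *\<^sub>R G s u) \<in> Conf E UNIV"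
      by (simp add: Conf_def)
  qed simp
  show thesis
    using homotopic_with_trans[OF FG GC] by (rule that)
qed

lemma nsphere_homeomorphic_maps_sphere_in_subspace:
  assumes "i < DIM('a::euclidean_space)"
  obtains L :: "'a::euclidean_space set" and \<phi> \<psi> where "subspace L" "dim L = Suc i"
    "homeomorphic_maps (nsphere i) (top_of_set (sphere 0 1 \<inter> L)) \<phi> \<psi>"
proof -
  have "Suc i \<le> card (Basis :: 'a set)"
    using assms by simp
  then obtain B :: "'a set" where B: "B \<subseteq> Basis" "card B = Suc i"
    by (meson obtain_subset_with_card_n)
  have indep: "independent B"
    using B(1) independent_Basis independent_mono by blast
  moreover have "pairwise orthogonal B"
    using B(1) orthogonal_Basis pairwise_subset by blast
  moreover have "\<And>u. u \<in> B \<Longrightarrow> norm u = 1"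
    using B(1) by auto
  ultimately obtain \<phi> \<psi> where "homeomorphic_maps (nsphere (Suc i - 1)) (top_of_set (sphere 0 1 \<inter> span B)) \<phi> \<psi>"
    using homeomorphic_maps_nsphere_euclidean_sphere B(2) by blast
  then show thesis
    using that[of "span B"] indep B(2) by (simp add: dim_eq_card_independent)
qed

lemma homeomorphic_maps_nullhomotopic:
  assumes hm: "homeomorphic_maps X Y \<phi> \<psi>" and f: "continuous_map X Z f"
    and Y: "\<And>g. continuous_map Y Z g \<Longrightarrow> \<exists>c. homotopic_with (\<lambda>_. True) Y Z g (\<lambda>_. c)"
  shows "\<exists>c. homotopic_with (\<lambda>_. True) X Z f (\<lambda>_. c)"
proof -
  have "continuous_map Y Z (f \<circ> \<psi>)"
    using hm f unfolding homeomorphic_maps_def by (meson continuous_map_compose)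
  then obtain c where "homotopic_with (\<lambda>_. True) Y Z (f \<circ> \<psi>) (\<lambda>_. c)"
    using Y by blast
  moreover have "continuous_map X Y \<phi>"
    using hm by (simp add: homeomorphic_maps_def)
  ultimately have "homotopic_with (\<lambda>_. True) X Z (f \<circ> \<psi> \<circ> \<phi>) ((\<lambda>_. c) \<circ> \<phi>)"
    by (rule homotopic_with_compose_continuous_map_right)
  then have "homotopic_with (\<lambda>_. True) X Z f (\<lambda>_. c)"
    by (rule homotopic_with_eq) (use hm in \<open>auto simp: homeomorphic_maps_def\<close>)
  then show ?thesis
    by blast
qed

lemma Conf_nsphere_map_nullhomotopic:
  fixes f :: "(nat \<Rightarrow> real) \<Rightarrow> 'v::finite \<Rightarrow> 'a::euclidean_space"
  assumes "Suc i < DIM('a)" and loopfree: "\<And>v. \<not> E v v"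
    and f: "continuous_map (nsphere i) (top_of_set (Conf E UNIV)) f"
  shows "\<exists>c. homotopic_with (\<lambda>_. True) (nsphere i) (top_of_set (Conf E UNIV)) f (\<lambda>_. c)"
proof -
  obtain L :: "'a set" and \<phi> \<psi> where L: "subspace L" "dim L = Suc i"
    and hm: "homeomorphic_maps (nsphere i) (top_of_set (sphere 0 1 \<inter> L)) \<phi> \<psi>"
    using assms(1) by (rule nsphere_homeomorphic_maps_sphere_in_subspace[OF Suc_lessD])
  show ?thesis
  proof (rule homeomorphic_maps_nullhomotopic[OF hm f])
    fix g :: "'a \<Rightarrow> 'v \<Rightarrow> 'a"
    assume "continuous_map (top_of_set (sphere 0 1 \<inter> L)) (top_of_set (Conf E UNIV)) g"
    then have g: "continuous_on (sphere 0 1 \<inter> L) g" "g ` (sphere 0 1 \<inter> L) \<subseteq> Conf E UNIV"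
      by (auto simp: image_subset_iff_funcset)
    have "compact (sphere 0 1 \<inter> L)"
      using L(1) by (simp add: compact_Int_closed closed_subspace)
    moreover have "dim L < DIM('a)"
      using L(2) assms(1) by simp
    ultimately obtain c where "homotopic_with_canon (\<lambda>_. True) (sphere 0 1 \<inter> L) (Conf E UNIV) g (\<lambda>_. c)"
      by (rule Conf_map_nullhomotopic_if_lowdim[where E = E, OF _ Int_lower2 L(1) _ loopfree g])
    then show "\<exists>c. homotopic_with (\<lambda>_. True) (top_of_set (sphere 0 1 \<inter> L)) (top_of_set (Conf E UNIV)) g (\<lambda>_. c)"
      by blast
  qed
qed

theorem corollary7p3:
  fixes E :: "'v::finite \<Rightarrow> 'v \<Rightarrow> bool"
  assumes "simple_graph E" and "connected_graph E" and "CARD('n::finite) > 2"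
  shows "k_connected_space (CARD('n) - 2)
           (subtopology euclidean (Conf E (UNIV :: (real^'n) set)))"
proof -
  have loopfree: "\<And>v. \<not> E v v"
    using assms(1) by (simp add: simple_graph_def)
  have "(\<lambda>v. vec (real (to_nat v))) \<in> Conf E (UNIV :: (real^'n) set)"
    using loopfree by (rule inj_in_Conf) (simp add: inj_def vec_eq_iff)
  moreover have "Suc i < DIM(real^'n)" if "i \<le> CARD('n) - 2" for i
    using that assms(3) by simp
  ultimately show ?thesis
    unfolding k_connected_space_def using Conf_nsphere_map_nullhomotopic[where 'a = "real^'n" and E = E, OF _ loopfree] by auto
qed

end
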